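(* Let $\delta > 0$ and $P > 0$, and let $\mathcal{X}$ be a $\delta$-spaced set of real numbers contained in $[-P, P]$. Let $I$ be a finite set, $\{y_i\}_{i \in I}$ a family of integers and $\{a_i\}_{i \in I}$ a family of complex numbers, and let $T \geq 0$ be a real number with $|y_i| \leq T$ for all $i \in I$. Put $f(t) = \sum_{i \in I} a_i e(t y_i)$ and $f^*(t) = \sum_{i \in I} |a_i| e(t y_i)$. Then \[ \Big| \sum_{x \in \mathcal{X}} f(x) \Big| \leq \pi \left( \mathrm{Card}(\mathcal{X})\, T + \frac{\mathrm{Card}(\mathcal{X})}{\delta} \right)^{1/2} (P+2)^{1/2} \left( \int_0^1 |f^*(t)|^2 \, dt \right)^{1/2}. \]
   Context: $e(z) = e^{2\pi i z}$. For $\delta > 0$, a $\delta$-spaced set of real numbers is a finite set $\mathcal{X}$ of distinct real numbers containing at least two elements such that $|x - x'| \geq \delta$ whenever $x, x'$ are distinct elements of $\mathcal{X}$. *)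

theory Defs
  imports "HOL-Analysis.Analysis"
begin

definition e :: "complex \<Rightarrow> complex" where
  "e z = exp (2 * pi * \<i> * z)"

definition delta_spaced :: "real \<Rightarrow> real set \<Rightarrow> bool" where
  "delta_spaced \<delta> X \<longleftrightarrow> finite X \<and> card X \<ge> 2 \<and>
     (\<forall>x\<in>X. \<forall>x'\<in>X. x \<noteq> x' \<longrightarrow> \<bar>x - x'\<bar> \<ge> \<delta>)"

end

theory Submission
  imports Defs
begin

(* Write S(n) = sum_{x in X} e(n x).  Exchanging sums gives
   sum_x f(x) = sum_i a_i S(y_i), and grouping the indices i by the value
   n = y_i (all |n| <= K := floor T) followed by Cauchy-Schwarz yields
     |sum_x f(x)|^2 <= (sum_n b_n^2) (sum_{|n|<=K} |S(n)|^2),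
   b_n = sum_{y_i = n} |a_i|.  By orthogonality of the characters on [0,1]
   (Parseval), sum_n b_n^2 = int_0^1 |f*(t)|^2 dt.  The heart of the proof
   is the large-sieve bound sum_{|n|<=K} |S(n)|^2 <= pi^2 N (T + 1/delta)(P+2),
   N = card X.  It uses the Dirichlet kernel D_M(t) = sum_{m<M} e(m t):
   expanding squares, sum_{m,m'<M} |S(m-m')|^2 = sum_{x,x'} |D_M(x-x')|^2;
   the left side is at least (M-K) sum_{|n|<=K} |S(n)|^2, while the bound
   |D_M(t)|^2 <= min(M^2, 1/(4 ||t||^2)) and the delta-spacing of X give
   sum_{x'} |D_M(x-x')|^2 <= (2P+2)(M^2 + 4/delta^2) for every x.  Taking
   M of size 2K + 2/delta gives the claim (for 1/delta < 2 the trivial bound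
   |S(n)| <= N is enough). *)

abbreviation separated :: "real \<Rightarrow> real set \<Rightarrow> bool" where
  "separated \<delta> A \<equiv> \<forall>a\<in>A. \<forall>b\<in>A. a \<noteq> b \<longrightarrow> \<delta> \<le> \<bar>a-b\<bar>"

lemma separated_reflect:
  assumes "separated \<delta> A"
  shows "separated \<delta> ((\<lambda>a. c - a) ` A)"
  using assms by (auto simp: abs_minus_commute)

lemma separated_card_le_one:
  assumes "finite A" "separated \<delta> A" "\<forall>a\<in>A. \<bar>a\<bar> < \<delta>/2"
  shows "card A \<le> 1"
proof -
  have "a = b" if "a \<in> A" "b \<in> A" for a b
  proof -
    have "\<bar>a\<bar> < \<delta>/2" "\<bar>b\<bar> < \<delta>/2" using that assms(3) by auto
    then have "\<bar>a - b\<bar> < \<delta>" by arith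
    then show ?thesis using that assms(2) by force
  qed
  then show ?thesis using card_le_Suc0_iff_eq[OF assms(1)] by auto
qed

(* Telescoping over a 2h-separated set: the intervals [a-h, a+h] are disjoint,
   so for a decreasing F the increments over them add up to at most F c - F b. *)
lemma separated_telescope:
  fixes A :: "real set" and F :: "real \<Rightarrow> real"
  assumes "finite A" "h \<ge> 0"
    and "separated (2*h) A"
    and "\<forall>a\<in>A. c \<le> a - h"
    and mono: "\<And>s t. c \<le> s \<Longrightarrow> s \<le> t \<Longrightarrow> F t \<le> F s"
    and "c \<le> b" "\<forall>a\<in>A. a + h \<le> b"
  shows "(\<Sum>a\<in>A. F (a-h) - F (a+h)) \<le> F c - F b"
  using assms(1,3,4,6,7)
proof (induction "card A" arbitrary: A b rule: less_induct)
  case less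
  show ?case
  proof (cases "A = {}")
    case True then show ?thesis using mono[OF order_refl \<open>c \<le> b\<close>] by simp
  next
    case False
    define m where "m = Max A"
    have mA: "m \<in> A" using False less.prems(1) by (simp add: m_def)
    have le: "a \<le> m" if "a \<in> A" for a using less.prems(1) that by (simp add: m_def)
    define A' where "A' = A - {m}"
    have cA': "card A' < card A" using mA less.prems(1) by (simp add: A'_def card_gt_0_iff False)
    have IH: "(\<Sum>a\<in>A'. F (a-h) - F (a+h)) \<le> F c - F (m - h)"
    proof (rule less.hyps[OF cA'])
      show "finite A'" using less.prems(1) by (simp add: A'_def)
      show "separated (2*h) A'" using less.prems(2) by (auto simp: A'_def)
      show "\<forall>a\<in>A'. c \<le> a - h" using less.prems(3) by (auto simp: A'_def)
      show "c \<le> m - h" using less.prems(3) mA by auto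
      show "\<forall>a\<in>A'. a + h \<le> m - h"
      proof
        fix a assume a: "a \<in> A'"
        then have "a \<noteq> m" "a \<in> A" by (auto simp: A'_def)
        then have "2*h \<le> \<bar>a - m\<bar>" "a \<le> m" using less.prems(2) mA le by auto
        then show "a + h \<le> m - h" by linarith
      qed
    qed
    have "(\<Sum>a\<in>A. F (a-h) - F (a+h)) = (F (m-h) - F (m+h)) + (\<Sum>a\<in>A'. F (a-h) - F (a+h))"
      unfolding A'_def using mA less.prems(1) by (simp add: sum.remove)
    also have "\<dots> \<le> F c - F (m+h)" using IH by simp
    also have "\<dots> \<le> F c - F b"
      using mono[of "m+h" b] less.prems(3,5) mA \<open>h \<ge> 0\<close> by force
    finally show ?thesis .
  qed
qed

lemma separated_card_bound:
  fixes X :: "real set"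
  assumes "finite X" "\<delta> > 0" "separated \<delta> X" "X \<subseteq> {-P..P}" "P \<ge> 0"
  shows "real (card X) * \<delta> \<le> 2*P + \<delta>"
proof (cases "X = {}")
  case True
  then show ?thesis using assms by simp
next
  case False
  then obtain x where "x \<in> X" by auto
  then have P0: "-P \<le> P" using assms(4) by auto
  have "(\<Sum>a\<in>X. (\<lambda>t. -t) (a - \<delta>/2) - (\<lambda>t. -t) (a + \<delta>/2)) \<le> (\<lambda>t. -t) (-P - \<delta>/2) - (\<lambda>t. -t) (P + \<delta>/2)"
    by (rule separated_telescope) (use assms P0 in auto)
  then show ?thesis by (simp add: mult.commute)
qed

lemma separated_diameter:
  assumes "delta_spaced \<delta> X" "X \<subseteq> {-P..P}"
  shows "\<delta> \<le> 2*P"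
proof -
  have finX: "finite X" and "\<not> card X \<le> Suc 0"
    using assms(1) unfolding delta_spaced_def by auto
  then obtain u v where uv: "u \<in> X" "v \<in> X" "u \<noteq> v"
    using card_le_Suc0_iff_eq[OF finX] by blast
  then have "\<delta> \<le> \<bar>u - v\<bar>" using assms(1) unfolding delta_spaced_def by blast
  moreover have "u \<in> {-P..P}" "v \<in> {-P..P}" using uv assms(2) by blast+
  then have "\<bar>u - v\<bar> \<le> 2*P" by (simp add: abs_le_iff)
  ultimately show ?thesis by simp
qed

(* Sum of 1/(4a^2) over a delta-separated set of points a >= delta/2,
   compared with a telescoping sum of 1/t. *)
lemma separated_inverse_square_sum:
  fixes A :: "real set"
  assumes "finite A" "\<delta> > 0" "separated \<delta> A" "\<forall>a\<in>A. \<delta>/2 \<le> a"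
  shows "(\<Sum>a\<in>A. 1 / (4 * a^2)) \<le> 2 / \<delta>^2"
proof -
  define b where "b = Max (insert (\<delta>/2) A) + \<delta>/4"
  have bge: "a + \<delta>/4 \<le> b" if "a \<in> A" for a
    using that assms(1) by (simp add: b_def)
  have b0: "\<delta>/4 \<le> b" using assms(1,2) Max_ge[of "insert (\<delta>/2) A" "\<delta>/2"] by (simp add: b_def)
  have tel: "(\<Sum>a\<in>A. (\<lambda>t. 1/t) (a - \<delta>/4) - (\<lambda>t. 1/t) (a + \<delta>/4)) \<le> (\<lambda>t. 1/t) (\<delta>/4) - (\<lambda>t. 1/t) b"
  proof (rule separated_telescope)
    show "\<And>s t. \<delta>/4 \<le> s \<Longrightarrow> s \<le> t \<Longrightarrow> 1/t \<le> 1/s" using assms(2)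
      by (simp add: frac_le)
    show "separated (2*(\<delta>/4)) A"
    proof (intro ballI impI)
      fix a b assume "a\<in>A" "b\<in>A" "a\<noteq>b"
      then have "\<delta> \<le> \<bar>a-b\<bar>" using assms(3) by blast
      then show "2*(\<delta>/4) \<le> \<bar>a-b\<bar>" using assms(2) by simp
    qed
  qed (use assms bge b0 in auto)
  have "1/b > 0" using b0 assms(2) by simp
  have "(\<Sum>a\<in>A. 1/(a - \<delta>/4) - 1/(a + \<delta>/4)) \<le> 4/\<delta> - 1/b" using tel by simp
  then have tel2: "(\<Sum>a\<in>A. 1/(a - \<delta>/4) - 1/(a + \<delta>/4)) \<le> 4/\<delta>" using \<open>1/b > 0\<close> by linarith
  have trm: "1 / (4 * a^2) \<le> (1/(2*\<delta>)) * (1/(a - \<delta>/4) - 1/(a + \<delta>/4))" if "a \<in> A" for a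
  proof -
    have a: "\<delta>/2 \<le> a" using assms(4) that by auto
    have p1: "a - \<delta>/4 > 0" "a + \<delta>/4 > 0" using a assms(2) by auto
    have "1/(a - \<delta>/4) - 1/(a + \<delta>/4) = (\<delta>/2) / (a^2 - \<delta>^2/16)"
      using p1 by (simp add: field_simps power2_eq_square)
    moreover have "a^2 - \<delta>^2/16 = (a - \<delta>/4)*(a + \<delta>/4)" by (simp add: power2_eq_square algebra_simps)
    then have pos: "a^2 - \<delta>^2/16 > 0" using p1 by simp
    have "(\<delta>/2) / a^2 \<le> (\<delta>/2) / (a^2 - \<delta>^2/16)"
      using pos assms(2) a by (intro divide_left_mono mult_pos_pos) auto
    ultimately have "(\<delta>/2) / a^2 \<le> 1/(a - \<delta>/4) - 1/(a + \<delta>/4)" by simp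
    then have "(1/(2*\<delta>)) * ((\<delta>/2)/a^2) \<le> (1/(2*\<delta>)) * (1/(a - \<delta>/4) - 1/(a + \<delta>/4))"
      using assms(2) by (intro mult_left_mono) auto
    moreover have "1/(4*a^2) = (1/(2*\<delta>)) * ((\<delta>/2)/a^2)" using assms(2) by (simp add: field_simps)
    ultimately show ?thesis by simp
  qed
  have "(\<Sum>a\<in>A. 1 / (4 * a^2)) \<le> (\<Sum>a\<in>A. (1/(2*\<delta>)) * (1/(a - \<delta>/4) - 1/(a + \<delta>/4)))"
    by (rule sum_mono) (rule trm)
  also have "\<dots> = (1/(2*\<delta>)) * (\<Sum>a\<in>A. 1/(a - \<delta>/4) - 1/(a + \<delta>/4))"
    by (simp add: sum_distrib_left)
  also have "\<dots> \<le> (1/(2*\<delta>)) * (4/\<delta>)"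
    using tel2 assms(2) by (intro mult_left_mono) auto
  also have "\<dots> = 2/\<delta>^2" by (simp add: power2_eq_square)
  finally show ?thesis .
qed

(* The majorant of the squared Dirichlet kernel near an integer: the constant C
   (= M^2) within distance delta/2, and 1/(4 a^2) elsewhere. *)
definition majorant :: "real \<Rightarrow> real \<Rightarrow> real \<Rightarrow> real" where
  "majorant \<delta> C a = (if \<bar>a\<bar> < \<delta>/2 then C else 1 / (4 * a^2))"

lemma majorant_nonneg: "C \<ge> 0 \<Longrightarrow> majorant \<delta> C a \<ge> 0"
  by (simp add: majorant_def)

(* Summed over a delta-separated set, the majorant is at most C + 4/delta^2:
   at most one point lies within delta/2 of 0, and each side contributes
   at most 2/delta^2. *)
lemma separated_majorant_sum:
  fixes A :: "real set"
  assumes "finite A" "\<delta> > 0" "separated \<delta> A" "C \<ge> 0"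
  shows "(\<Sum>a\<in>A. majorant \<delta> C a) \<le> C + 4 / \<delta>^2"
proof -
  define A0 where "A0 = {a\<in>A. \<bar>a\<bar> < \<delta>/2}"
  define Ap where "Ap = {a\<in>A. \<delta>/2 \<le> a}"
  define An where "An = {a\<in>A. a \<le> -\<delta>/2}"
  have fin: "finite A0" "finite Ap" "finite An" using assms(1) by (auto simp: A0_def Ap_def An_def)
  have "A = A0 \<union> (Ap \<union> An)" "A0 \<inter> (Ap \<union> An) = {}" "Ap \<inter> An = {}"
    using assms(2) by (auto simp: A0_def Ap_def An_def)
  then have split: "(\<Sum>a\<in>A. majorant \<delta> C a)
      = (\<Sum>a\<in>A0. majorant \<delta> C a) + ((\<Sum>a\<in>Ap. majorant \<delta> C a) + (\<Sum>a\<in>An. majorant \<delta> C a))"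
    by (simp add: sum.union_disjoint fin)
  have "(\<Sum>a\<in>A0. majorant \<delta> C a) = real (card A0) * C" by (simp add: majorant_def A0_def)
  also have "\<dots> \<le> C"
  proof -
    have "card A0 \<le> 1" by (rule separated_card_le_one[OF fin(1)]) (use assms(3) in \<open>auto simp: A0_def\<close>)
    then show ?thesis using assms(4) by (simp add: mult_left_le_one_le)
  qed
  finally have near: "(\<Sum>a\<in>A0. majorant \<delta> C a) \<le> C" .
  have "(\<Sum>a\<in>Ap. majorant \<delta> C a) = (\<Sum>a\<in>Ap. 1 / (4*a^2))"
    using assms(2) by (intro sum.cong) (auto simp: majorant_def Ap_def)
  also have "\<dots> \<le> 2/\<delta>^2"
    by (rule separated_inverse_square_sum) (use fin assms in \<open>auto simp: Ap_def\<close>)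
  finally have right: "(\<Sum>a\<in>Ap. majorant \<delta> C a) \<le> 2/\<delta>^2" .
  have "(\<Sum>a\<in>An. majorant \<delta> C a) = (\<Sum>a\<in>An. 1 / (4*(0 - a)^2))"
    using assms(2) by (intro sum.cong) (auto simp: majorant_def An_def)
  also have "\<dots> = (\<Sum>b\<in>(\<lambda>a. 0 - a) ` An. 1 / (4*b^2))"
    by (subst sum.reindex) (auto intro: inj_onI)
  also have "\<dots> \<le> 2/\<delta>^2"
  proof (rule separated_inverse_square_sum)
    show "separated \<delta> ((\<lambda>a. 0 - a) ` An)"
      by (rule separated_reflect) (use assms(3) in \<open>auto simp: An_def\<close>)
  qed (use fin assms in \<open>auto simp: An_def\<close>)
  finally have left: "(\<Sum>a\<in>An. majorant \<delta> C a) \<le> 2/\<delta>^2" .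
  show ?thesis using split near right left by simp
qed

(* Jordan's inequality, from concavity of sin on [0, pi]. *)
lemma jordan_inequality:
  fixes x :: real assumes "0 \<le> x" "x \<le> pi/2"
  shows "2 * x / pi \<le> sin x"
proof -
  have cv: "convex_on {0..pi} (\<lambda>x. - sin x)"
    by (rule f''_ge0_imp_convex[where f'="\<lambda>x. - cos x" and f''="\<lambda>x. sin x"])
       (auto intro!: derivative_eq_intros sin_ge_zero)
  define t where "t = 2 * x / pi"
  have t: "0 \<le> t" "t \<le> 1" using assms pi_gt_zero by (auto simp: t_def field_simps)
  have "- sin ((1 - t) *\<^sub>R 0 + t *\<^sub>R (pi/2)) \<le> (1 - t) * (- sin 0) + t * (- sin (pi/2))"
    by (rule convex_onD[OF cv]) (use t pi_gt_zero in auto)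
  moreover have "(1 - t) *\<^sub>R 0 + t *\<^sub>R (pi/2) = x" using pi_gt_zero by (simp add: t_def)
  ultimately show ?thesis by (simp add: t_def)
qed

lemma sin_pi_sq_lower:
  fixes t :: real assumes "\<bar>t\<bar> \<le> 1/2"
  shows "4 * t^2 \<le> (sin (pi * t))^2"
proof -
  have "2 * (pi * \<bar>t\<bar>) / pi \<le> sin (pi * \<bar>t\<bar>)"
    by (rule jordan_inequality) (use assms pi_gt_zero in auto)
  then have h: "2 * \<bar>t\<bar> \<le> sin (pi * \<bar>t\<bar>)" by simp
  have "(sin (pi * t))^2 = (sin (pi * \<bar>t\<bar>))^2"
    by (cases "t \<ge> 0") (auto simp: abs_if)
  moreover have "(2 * \<bar>t\<bar>)^2 \<le> (sin (pi * \<bar>t\<bar>))^2"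
    using h by (intro power_mono) auto
  ultimately show ?thesis by (simp add: power_mult_distrib)
qed

definition dirichlet :: "nat \<Rightarrow> real \<Rightarrow> complex" where
  "dirichlet M \<theta> = (\<Sum>m<M. cis (2 * pi * real m * \<theta>))"

lemma dirichlet_le_length: "cmod (dirichlet M \<theta>) \<le> real M"
proof -
  have "cmod (dirichlet M \<theta>) \<le> (\<Sum>m<M. cmod (cis (2 * pi * real m * \<theta>)))"
    unfolding dirichlet_def by (rule norm_sum)
  then show ?thesis by simp
qed

lemma cis_double_minus_one: "cis (2*a) - 1 = cis a * (2 * \<i> * complex_of_real (sin a))"
  using cos_double_sin[of a] sin_double[of a] by (simp add: complex_eq_iff power2_eq_square algebra_simps)

(* Summing the geometric series: |D_M(t)| <= 1/|sin(pi t)|. *)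
lemma dirichlet_le_inverse_sin:
  assumes "sin (pi * \<theta>) \<noteq> 0"
  shows "cmod (dirichlet M \<theta>) \<le> 1 / \<bar>sin (pi * \<theta>)\<bar>"
proof -
  define z where "z = cis (2 * pi * \<theta>)"
  have z1: "z - 1 = cis (pi*\<theta>) * (2 * \<i> * complex_of_real (sin (pi*\<theta>)))"
    unfolding z_def using cis_double_minus_one[of "pi*\<theta>"] by (simp add: mult.assoc)
  have nz1: "cmod (z - 1) = 2 * \<bar>sin (pi*\<theta>)\<bar>"
    unfolding z1 by (simp add: norm_mult)
  have zne: "z \<noteq> 1" using nz1 assms by auto
  have zm: "z ^ m = cis (2 * pi * real m * \<theta>)" for m
    unfolding z_def Complex.DeMoivre by (simp add: mult_ac)
  have "dirichlet M \<theta> = (\<Sum>m<M. z ^ m)"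
    unfolding dirichlet_def zm by simp
  also have "\<dots> = (z ^ M - 1) / (z - 1)" by (rule geometric_sum[OF zne])
  finally have G: "dirichlet M \<theta> = (z ^ M - 1) / (z - 1)" .
  have "cmod (z ^ M - 1) \<le> cmod (z ^ M) + cmod (1::complex)" by (rule norm_triangle_ineq4)
  also have "\<dots> = 2" by (simp add: z_def norm_power)
  finally have num: "cmod (z ^ M - 1) \<le> 2" .
  have "cmod (dirichlet M \<theta>) = cmod (z ^ M - 1) / (2 * \<bar>sin (pi*\<theta>)\<bar>)"
    unfolding G by (simp add: norm_divide nz1)
  also have "\<dots> \<le> 2 / (2 * \<bar>sin (pi*\<theta>)\<bar>)"
    using num assms by (intro divide_right_mono) auto
  finally show ?thesis by simp
qed

lemma dirichlet_periodic: "dirichlet M (t + real_of_int k) = dirichlet M t"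
  unfolding dirichlet_def
proof (rule sum.cong[OF refl])
  fix m assume "m \<in> {..<M}"
  have "cis (2 * pi * real m * (t + real_of_int k)) = cis (2 * pi * real m * t) * cis (2 * pi * (real m * real_of_int k))"
    by (simp add: cis_mult algebra_simps)
  also have "cis (2 * pi * (real m * real_of_int k)) = 1"
    by (rule cis_multiple_2pi) (metis Ints_mult Ints_of_int Ints_of_nat)
  finally show "cis (2 * pi * real m * (t + real_of_int k)) = cis (2 * pi * real m * t)" by simp
qed

lemma dirichlet_sq_le_majorant:
  assumes "\<bar>t\<bar> \<le> 1/2" "\<delta> > 0"
  shows "(cmod (dirichlet M (t + real_of_int k)))^2 \<le> majorant \<delta> ((real M)^2) t"
proof (cases "\<bar>t\<bar> < \<delta>/2")
  case True
  then show ?thesis using dirichlet_le_length[of M "t + real_of_int k"] by (simp add: power_mono majorant_def)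
next
  case False
  then have t0: "t \<noteq> 0" using assms by auto
  have s: "4 * t^2 \<le> (sin (pi * t))^2" by (rule sin_pi_sq_lower[OF assms(1)])
  have tp: "4 * t^2 > 0" using t0 by simp
  then have sp: "sin (pi * t) \<noteq> 0" using s by auto
  have "cmod (dirichlet M t) \<le> 1 / \<bar>sin (pi * t)\<bar>" by (rule dirichlet_le_inverse_sin[OF sp])
  then have "(cmod (dirichlet M t))^2 \<le> (1 / \<bar>sin (pi * t)\<bar>)^2" by (intro power_mono) auto
  also have "\<dots> = 1 / (sin (pi * t))^2" by (simp add: power_divide)
  also have "\<dots> \<le> 1 / (4 * t^2)" using s tp by (intro divide_left_mono mult_pos_pos) auto
  finally show ?thesis using False by (simp add: dirichlet_periodic majorant_def)
qed

lemma card_integer_window: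
  fixes x L :: real
  assumes "0 \<le> L"
  shows "real (card {\<lceil>x - L\<rceil>..\<lfloor>x + L\<rfloor>}) \<le> 2*L + 1"
proof (cases "\<lceil>x - L\<rceil> \<le> \<lfloor>x + L\<rfloor>")
  case True
  then have "real (card {\<lceil>x - L\<rceil>..\<lfloor>x + L\<rfloor>}) = real_of_int (\<lfloor>x + L\<rfloor> - \<lceil>x - L\<rceil> + 1)"
    by simp
  then show ?thesis using of_int_floor_le[of "x + L"] le_of_int_ceiling[of "x - L"] by linarith
next
  case False
  then show ?thesis using assms by simp
qed

(* Row bound: covering the translates by integers k, for every x the sum
   of |D_M(x - x')|^2 over a delta-separated X in [-P, P] is at most
   (2P + 2)(M^2 + 4/delta^2). *)
lemma dirichlet_row_bound:
  fixes X :: "real set"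
  assumes "finite X" "\<delta> > 0" "separated \<delta> X" "X \<subseteq> {-P..P}" "P \<ge> 0"
  shows "(\<Sum>x'\<in>X. (cmod (dirichlet M (x - x')))^2) \<le> (2*P + 2) * ((real M)^2 + 4/\<delta>^2)"
proof -
  define R where "R = {\<lceil>x - (P + 1/2)\<rceil>..\<lfloor>x + (P + 1/2)\<rfloor>}"
  define C where "C = (real M)^2"
  have C0: "C \<ge> 0" by (simp add: C_def)
  have pointwise: "(cmod (dirichlet M (x - x')))^2 \<le> (\<Sum>k\<in>R. majorant \<delta> C (x - x' - real_of_int k))"
    if "x' \<in> X" for x'
  proof -
    define k0 where "k0 = round (x - x')"
    define t where "t = x - x' - real_of_int k0"
    have t: "\<bar>t\<bar> \<le> 1/2" unfolding t_def k0_def using of_int_round_abs_le[of "x - x'"] by linarith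
    have "-P \<le> x'" "x' \<le> P" using that assms(4) by auto
    moreover have "-1/2 \<le> x - x' - real_of_int k0" "x - x' - real_of_int k0 \<le> 1/2"
      using t unfolding t_def by linarith+
    ultimately have k0R: "k0 \<in> R" unfolding R_def by (auto simp: ceiling_le_iff le_floor_iff)
    have "(cmod (dirichlet M (x - x')))^2 = (cmod (dirichlet M (t + real_of_int k0)))^2" by (simp add: t_def)
    also have "\<dots> \<le> majorant \<delta> C t" unfolding C_def by (rule dirichlet_sq_le_majorant[OF t assms(2)])
    also have "\<dots> = majorant \<delta> C (x - x' - real_of_int k0)" by (simp add: t_def)
    also have "\<dots> \<le> (\<Sum>k\<in>R. majorant \<delta> C (x - x' - real_of_int k))"
      using k0R C0 by (intro member_le_sum majorant_nonneg) (auto simp: R_def)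
    finally show ?thesis .
  qed
  have shifted: "(\<Sum>x'\<in>X. majorant \<delta> C (x - x' - real_of_int k)) \<le> C + 4/\<delta>^2" for k
  proof -
    have "(\<Sum>x'\<in>X. majorant \<delta> C (x - x' - real_of_int k))
        = (\<Sum>a\<in>(\<lambda>x'. (x - real_of_int k) - x') ` X. majorant \<delta> C a)"
      by (subst sum.reindex) (auto intro: inj_onI simp: algebra_simps)
    also have "\<dots> \<le> C + 4/\<delta>^2"
      using separated_reflect[OF assms(3)] assms(1,2) C0 by (intro separated_majorant_sum) auto
    finally show ?thesis .
  qed
  have "(\<Sum>x'\<in>X. (cmod (dirichlet M (x - x')))^2) \<le> (\<Sum>x'\<in>X. \<Sum>k\<in>R. majorant \<delta> C (x - x' - real_of_int k))"
    by (rule sum_mono) (rule pointwise)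
  also have "\<dots> = (\<Sum>k\<in>R. \<Sum>x'\<in>X. majorant \<delta> C (x - x' - real_of_int k))" by (rule sum.swap)
  also have "\<dots> \<le> real (card R) * (C + 4/\<delta>^2)"
    using sum_mono[of R _ "\<lambda>_. C + 4/\<delta>^2"] shifted by simp
  also have "\<dots> \<le> (2*P + 2) * (C + 4/\<delta>^2)"
    using card_integer_window[of "P + 1/2" x] assms(5) C0 unfolding R_def
    by (intro mult_right_mono) auto
  finally show ?thesis by (simp add: C_def)
qed

(* Each difference n with |n| <= K <= M occurs at least M - K times as m - m'
   with 0 <= m, m' < M. *)
lemma difference_sum_lower:
  fixes g :: "int \<Rightarrow> real" and Mi K :: int
  assumes "0 \<le> K" "K \<le> Mi" "\<And>n. g n \<ge> 0"
  shows "of_int (Mi - K) * (\<Sum>n\<in>{-K..K}. g n) \<le> (\<Sum>p\<in>{0..<Mi}\<times>{0..<Mi}. g (fst p - snd p))"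
proof -
  define \<phi> where "\<phi> q = (snd q + max 0 (- fst q) + fst q, snd q + max 0 (- fst q))" for q :: "int \<times> int"
  define D where "D = {-K..K} \<times> {0..<Mi-K}"
  have inj: "inj_on \<phi> D"
  proof (rule inj_onI)
    fix q r assume "q \<in> D" "r \<in> D" "\<phi> q = \<phi> r"
    then have "fst q = fst r" by (auto simp: \<phi>_def)
    with \<open>\<phi> q = \<phi> r\<close> have "snd q = snd r" by (auto simp: \<phi>_def)
    with \<open>fst q = fst r\<close> show "q = r" by (simp add: prod_eq_iff)
  qed
  have sub: "\<phi> ` D \<subseteq> {0..<Mi}\<times>{0..<Mi}"
    using assms(1,2) by (auto simp: \<phi>_def D_def)
  have "of_int (Mi - K) * (\<Sum>n\<in>{-K..K}. g n) = (\<Sum>n\<in>{-K..K}. \<Sum>j\<in>{0..<Mi-K}. g n)"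
    using assms(2) by (simp add: sum_distrib_left mult.commute)
  also have "\<dots> = (\<Sum>q\<in>D. g (fst q))" unfolding D_def sum.cartesian_product by (simp add: case_prod_beta)
  also have "\<dots> = (\<Sum>q\<in>D. g (fst (\<phi> q) - snd (\<phi> q)))" by (simp add: \<phi>_def)
  also have "\<dots> = (\<Sum>p\<in>\<phi> ` D. g (fst p - snd p))" by (simp add: sum.reindex[OF inj])
  also have "\<dots> \<le> (\<Sum>p\<in>{0..<Mi}\<times>{0..<Mi}. g (fst p - snd p))"
    by (rule sum_mono2) (use sub assms(3) in auto)
  finally show ?thesis .
qed

lemma double_sum_nat_to_int:
  fixes g :: "int \<Rightarrow> real"
  shows "(\<Sum>m<M. \<Sum>m'<M. g (int m - int m')) = (\<Sum>p\<in>{0..<int M}\<times>{0..<int M}. g (fst p - snd p))"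
proof -
  have e: "{0..<int M} = int ` {..<M}" by (simp add: image_atLeastZeroLessThan_int)
  have "(\<Sum>p\<in>{0..<int M}\<times>{0..<int M}. g (fst p - snd p)) = (\<Sum>m\<in>{0..<int M}. \<Sum>m'\<in>{0..<int M}. g (m - m'))"
    unfolding sum.cartesian_product by (simp add: case_prod_beta)
  also have "\<dots> = (\<Sum>m<M. \<Sum>m'<M. g (int m - int m'))"
    unfolding e by (simp add: sum.reindex)
  finally show ?thesis by simp
qed

definition exp_sum :: "real set \<Rightarrow> int \<Rightarrow> complex" where
  "exp_sum X n = (\<Sum>x\<in>X. cis (2 * pi * x * real_of_int n))"

(* Energy identity sum_{x,x'} |D_M(x - x')|^2 = sum_{m,m'<M} |S(m - m')|^2:
   both sides expand to the same quadruple sum of e((m - m')(x - x')). *)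
lemma dirichlet_energy_identity:
  fixes X :: "real set"
  shows "(\<Sum>x\<in>X. \<Sum>x'\<in>X. (cmod (dirichlet M (x - x')))^2) = (\<Sum>m<M. \<Sum>m'<M. (cmod (exp_sum X (int m - int m')))^2)"
proof -
  define c where "c x x' m m' = cis (2 * pi * (real m - real m') * (x - x'))" for x x' :: real and m m' :: nat
  have L: "complex_of_real ((cmod (dirichlet M (x - x')))^2) = (\<Sum>m<M. \<Sum>m'<M. c x x' m m')" for x x'
  proof -
    have "complex_of_real ((cmod (dirichlet M (x - x')))^2) = dirichlet M (x - x') * cnj (dirichlet M (x - x'))"
      by (rule complex_norm_square)
    also have "\<dots> = (\<Sum>m<M. \<Sum>m'<M. cis (2 * pi * real m * (x - x')) * cis (- (2 * pi * real m' * (x - x'))))"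
      unfolding dirichlet_def by (simp add: sum_product cis_cnj)
    also have "\<dots> = (\<Sum>m<M. \<Sum>m'<M. c x x' m m')"
      unfolding c_def by (intro sum.cong refl) (simp add: cis_mult algebra_simps)
    finally show ?thesis .
  qed
  have R: "complex_of_real ((cmod (exp_sum X (int m - int m')))^2) = (\<Sum>x\<in>X. \<Sum>x'\<in>X. c x x' m m')" for m m'
  proof -
    have "complex_of_real ((cmod (exp_sum X (int m - int m')))^2) = exp_sum X (int m - int m') * cnj (exp_sum X (int m - int m'))"
      by (rule complex_norm_square)
    also have "\<dots> = (\<Sum>x\<in>X. \<Sum>x'\<in>X. cis (2 * pi * x * real_of_int (int m - int m')) * cis (- (2 * pi * x' * real_of_int (int m - int m'))))"
      unfolding exp_sum_def by (simp add: sum_product cis_cnj)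
    also have "\<dots> = (\<Sum>x\<in>X. \<Sum>x'\<in>X. c x x' m m')"
      unfolding c_def by (intro sum.cong refl) (simp add: cis_mult algebra_simps)
    finally show ?thesis .
  qed
  have sw: "(\<Sum>x\<in>X. \<Sum>x'\<in>X. \<Sum>m<M. \<Sum>m'<M. c x x' m m') = (\<Sum>m<M. \<Sum>m'<M. \<Sum>x\<in>X. \<Sum>x'\<in>X. c x x' m m')"
  proof -
    have "(\<Sum>x\<in>X. \<Sum>x'\<in>X. \<Sum>m<M. \<Sum>m'<M. c x x' m m') = (\<Sum>x\<in>X. \<Sum>m<M. \<Sum>x'\<in>X. \<Sum>m'<M. c x x' m m')"
      by (rule sum.cong[OF refl], rule sum.swap)
    also have "\<dots> = (\<Sum>m<M. \<Sum>x\<in>X. \<Sum>x'\<in>X. \<Sum>m'<M. c x x' m m')"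
      by (rule sum.swap)
    also have "\<dots> = (\<Sum>m<M. \<Sum>x\<in>X. \<Sum>m'<M. \<Sum>x'\<in>X. c x x' m m')"
      by (rule sum.cong[OF refl], rule sum.cong[OF refl], rule sum.swap)
    also have "\<dots> = (\<Sum>m<M. \<Sum>m'<M. \<Sum>x\<in>X. \<Sum>x'\<in>X. c x x' m m')"
      by (rule sum.cong[OF refl], rule sum.swap)
    finally show ?thesis .
  qed
  have "complex_of_real (\<Sum>x\<in>X. \<Sum>x'\<in>X. (cmod (dirichlet M (x - x')))^2) = complex_of_real (\<Sum>m<M. \<Sum>m'<M. (cmod (exp_sum X (int m - int m')))^2)"
    by (simp only: of_real_sum L R sw)
  then show ?thesis by (simp only: of_real_eq_iff)
qed

lemma exp_sum_energy_bound:
  fixes X :: "real set" and K :: int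
  assumes "finite X" "\<delta> > 0" "separated \<delta> X" "X \<subseteq> {-P..P}" "P \<ge> 0"
    and "0 \<le> K" "K \<le> int M"
  shows "of_int (int M - K) * (\<Sum>n\<in>{-K..K}. (cmod (exp_sum X n))^2) \<le> real (card X) * ((2*P + 2) * ((real M)^2 + 4/\<delta>^2))"
proof -
  have "of_int (int M - K) * (\<Sum>n\<in>{-K..K}. (cmod (exp_sum X n))^2) \<le> (\<Sum>p\<in>{0..<int M}\<times>{0..<int M}. (cmod (exp_sum X (fst p - snd p)))^2)"
    by (rule difference_sum_lower[where g="\<lambda>n. (cmod (exp_sum X n))^2"]) (use assms in auto)
  also have "\<dots> = (\<Sum>m<M. \<Sum>m'<M. (cmod (exp_sum X (int m - int m')))^2)"
    by (rule double_sum_nat_to_int[where g="\<lambda>n. (cmod (exp_sum X n))^2", symmetric])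
  also have "\<dots> = (\<Sum>x\<in>X. \<Sum>x'\<in>X. (cmod (dirichlet M (x - x')))^2)"
    by (rule dirichlet_energy_identity[symmetric])
  also have "\<dots> \<le> (\<Sum>x\<in>X. (2*P + 2) * ((real M)^2 + 4/\<delta>^2))"
    by (rule sum_mono) (rule dirichlet_row_bound[OF assms(1-5)])
  also have "\<dots> = real (card X) * ((2*P + 2) * ((real M)^2 + 4/\<delta>^2))" by simp
  finally show ?thesis .
qed

lemma exp_sum_le_card: "cmod (exp_sum X n) \<le> real (card X)"
proof -
  have "cmod (exp_sum X n) \<le> (\<Sum>x\<in>X. cmod (cis (2 * pi * x * real_of_int n)))"
    unfolding exp_sum_def by (rule norm_sum)
  then show ?thesis by simp
qed

(* Large sieve when the spacing is small (1/delta >= 2): apply the energy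
   bound with a kernel of length M = 2K + d, where d is about 2/delta. *)
lemma large_sieve_kernel_case:
  fixes X :: "real set" and K :: int
  assumes "finite X" "\<delta> > 0" "separated \<delta> X" "X \<subseteq> {-P..P}" "P \<ge> 0"
    and K0: "0 \<le> K" and big: "2 \<le> 1/\<delta>"
  shows "(\<Sum>n\<in>{-K..K}. (cmod (exp_sum X n))^2) \<le> 9 * real (card X) * (real_of_int K + 1/\<delta>) * (P + 1)"
proof -
  define N where "N = real (card X)"
  define u where "u = 1/\<delta>"
  define Q where "Q = (\<Sum>n\<in>{-K..K}. (cmod (exp_sum X n))^2)"
  have N0: "N \<ge> 0" by (simp add: N_def)
  have u0: "u > 0" using assms(2) by (simp add: u_def)
  have u_big: "2 \<le> u" using big by (simp add: u_def)
  define d where "d = nat \<lceil>2*u\<rceil>"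
  have d1: "2*u \<le> real d" "real d \<le> 2*u + 1" using u0
    by (auto simp: d_def)
  define M where "M = nat (2*K) + d"
  have MK: "K \<le> int M" using K0 by (simp add: M_def)
  have M': "real M = 2 * real_of_int K + real d" using K0 by (simp add: M_def)
  have Kd: "real_of_int K + real d > 0" using d1 u0 K0 by linarith
  have main: "(real_of_int K + real d) * Q \<le> N * ((2*P + 2) * ((real M)^2 + 4*u^2))"
  proof -
    have Mk': "real M - real_of_int K = real_of_int K + real d" using M' by simp
    show ?thesis
    using exp_sum_energy_bound[OF assms(1-5) K0 MK] by (simp add: Mk' Q_def N_def u_def power_divide)
  qed
  have "(real M)^2 \<le> (real_of_int K + real d) * (4 * real_of_int K + real d)"
    unfolding M' using K0 d1 u0 by (simp add: power2_eq_square algebra_simps)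
  moreover have "4*u^2 \<le> (real_of_int K + real d) * (2*u)"
  proof -
    have "4*u^2 = (2*u)*(2*u)" by (simp add: power2_eq_square)
    also have "\<dots> \<le> (real_of_int K + real d) * (2*u)"
      using d1 K0 u0 by (intro mult_right_mono) auto
    finally show ?thesis .
  qed
  ultimately have "(real M)^2 + 4*u^2 \<le> (real_of_int K + real d) * (4 * real_of_int K + real d + 2*u)"
    by (simp add: algebra_simps)
  also have "\<dots> \<le> (real_of_int K + real d) * (9/2 * (real_of_int K + u))"
    using Kd d1 u_big K0 by (intro mult_left_mono) auto
  finally have b1: "(real M)^2 + 4*u^2 \<le> (real_of_int K + real d) * (9/2 * (real_of_int K + u))" .
  have "N * ((2*P + 2) * ((real M)^2 + 4*u^2)) \<le> N * ((2*P + 2) * ((real_of_int K + real d) * (9/2 * (real_of_int K + u))))"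
    using b1 N0 assms(5) by (intro mult_left_mono) auto
  also have "\<dots> = (real_of_int K + real d) * (9 * N * (real_of_int K + u) * (P + 1))"
    by (simp add: algebra_simps)
  finally have "(real_of_int K + real d) * Q \<le> (real_of_int K + real d) * (9 * N * (real_of_int K + u) * (P + 1))"
    using main by linarith
  then have "Q \<le> 9 * N * (real_of_int K + u) * (P + 1)" using Kd by simp
  then show ?thesis by (simp add: Q_def N_def u_def)
qed

(* Large sieve when the spacing is large (1/delta < 2): the trivial bound
   |S(n)| <= card X suffices, since card X <= 2P/delta + 1. *)
lemma large_sieve_trivial_case:
  fixes X :: "real set" and K :: int
  assumes "finite X" "\<delta> > 0" "separated \<delta> X" "X \<subseteq> {-P..P}" "P \<ge> 0"
    and "\<delta> \<le> 2*P" and K0: "0 \<le> K" and small: "1/\<delta> < 2"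
  shows "(\<Sum>n\<in>{-K..K}. (cmod (exp_sum X n))^2) \<le> 9 * real (card X) * (real_of_int K + 1/\<delta>) * (P + 1)"
proof -
  define N where "N = real (card X)"
  define u where "u = 1/\<delta>"
  define Q where "Q = (\<Sum>n\<in>{-K..K}. (cmod (exp_sum X n))^2)"
  have N0: "N \<ge> 0" by (simp add: N_def)
  have u0: "u > 0" using assms(2) by (simp add: u_def)
  have u_small: "u \<le> 2" using small by (simp add: u_def)
  have "Q \<le> (\<Sum>n\<in>{-K..K}. N^2)"
    unfolding Q_def N_def by (rule sum_mono) (use exp_sum_le_card in \<open>auto intro: power_mono\<close>)
  also have "\<dots> = (2 * real_of_int K + 1) * N^2" using K0 by simp
  finally have q1: "Q \<le> (2 * real_of_int K + 1) * N^2" .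
  have Nb: "N * \<delta> \<le> 2*P + \<delta>" unfolding N_def by (rule separated_card_bound[OF assms(1-5)])
  then have Nb': "N \<le> 2*P*u + 1" using assms(2) by (simp add: u_def field_simps)
  have Pu: "1/2 \<le> P*u" using assms(2,6) by (simp add: u_def field_simps)
  have "(2 * real_of_int K + 1) * N^2 = N * ((2 * real_of_int K + 1) * N)" by (simp add: power2_eq_square)
  also have "\<dots> \<le> N * ((2 * real_of_int K + 1) * (2*P*u + 1))"
    using Nb' N0 K0 by (intro mult_left_mono) auto
  also have "\<dots> \<le> N * (9 * (real_of_int K + u) * (P + 1))"
  proof (rule mult_left_mono[OF _ N0])
    have "real_of_int K * (P*u) \<le> real_of_int K * (P*2)"
      using u_small assms(5) K0 by (intro mult_left_mono) auto
    moreover have "0 \<le> real_of_int K * P" using K0 assms(5) by simp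
    ultimately show "(2 * real_of_int K + 1) * (2*P*u + 1) \<le> 9 * (real_of_int K + u) * (P + 1)"
      using Pu u0 K0 by (simp add: algebra_simps)
  qed
  finally show ?thesis using q1 by (simp add: mult_ac Q_def N_def u_def)
qed

lemma large_sieve:
  fixes X :: "real set" and T :: real
  assumes "finite X" "\<delta> > 0" "separated \<delta> X" "X \<subseteq> {-P..P}" "P \<ge> 0"
    and "\<delta> \<le> 2*P" "T \<ge> 0"
  shows "(\<Sum>n\<in>{-\<lfloor>T\<rfloor>..\<lfloor>T\<rfloor>}. (cmod (exp_sum X n))^2)
           \<le> pi^2 * ((real (card X) * T + real (card X) / \<delta>) * (P + 2))"
proof -
  define K where "K = \<lfloor>T\<rfloor>"
  have K0: "0 \<le> K" using assms(7) by (simp add: K_def)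
  have "(\<Sum>n\<in>{-K..K}. (cmod (exp_sum X n))^2) \<le> 9 * real (card X) * (real_of_int K + 1/\<delta>) * (P + 1)"
    using large_sieve_kernel_case[OF assms(1-5) K0] large_sieve_trivial_case[OF assms(1-6) K0]
    by (cases "2 \<le> 1/\<delta>") auto
  also have "\<dots> \<le> pi^2 * real (card X) * (T + 1/\<delta>) * (P + 2)"
  proof -
    have "3^2 \<le> pi^2" using pi_gt3 by (intro power_mono) auto
    moreover have "real_of_int K \<le> T" by (simp add: K_def)
    ultimately show ?thesis using assms(2,5) K0
      by (intro mult_mono) (auto intro: mult_left_mono)
  qed
  also have "\<dots> = pi^2 * ((real (card X) * (T + 1/\<delta>)) * (P + 2))"
    by (simp only: mult.assoc)
  also have "\<dots> = pi^2 * ((real (card X) * T + real (card X) / \<delta>) * (P + 2))"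
    unfolding distrib_left[of "real (card X)" T "1/\<delta>"] by simp
  finally show ?thesis by (simp add: K_def)
qed

lemma cos_integral:
  fixes k :: int
  shows "((\<lambda>t. cos (2*pi*real_of_int k*t)) has_integral (if k = 0 then 1 else 0)) {0..1}"
proof (cases "k = 0")
  case True
  then show ?thesis using has_integral_const_real[of "1::real" 0 1] by simp
next
  case False
  define c where "c = 2*pi*real_of_int k"
  have c0: "c \<noteq> 0" using False by (simp add: c_def)
  have "((\<lambda>t. cos (c*t)) has_integral (sin (c*1)/c - sin (c*0)/c)) {0..1}"
  proof (rule fundamental_theorem_of_calculus)
    fix x :: real
    have "((\<lambda>t. sin (c*t)/c) has_real_derivative cos (c*x)) (at x within {0..1})"
      using c0 by (auto intro!: derivative_eq_intros)
    then show "((\<lambda>t. sin (c*t)/c) has_vector_derivative cos (c*x)) (at x within {0..1})"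
      by (simp add: has_real_derivative_iff_has_vector_derivative)
  qed simp
  moreover have "sin c = 0"
    unfolding c_def sin_zero_iff_int2 by (rule exI[of _ "2*k"]) simp
  ultimately show ?thesis using False by (simp add: c_def)
qed

lemma trig_poly_norm_sq:
  fixes c :: "'i \<Rightarrow> real" and y :: "'i \<Rightarrow> int"
  assumes "finite I"
  shows "(cmod (\<Sum>i\<in>I. complex_of_real (c i) * cis (2*pi*t*real_of_int (y i))))^2
       = (\<Sum>i\<in>I. \<Sum>j\<in>I. c i * c j * cos (2*pi*real_of_int (y i - y j)*t))"
proof -
  define z where "z = (\<Sum>i\<in>I. complex_of_real (c i) * cis (2*pi*t*real_of_int (y i)))"
  have "complex_of_real ((cmod z)^2) = z * cnj z" by (rule complex_norm_square)
  also have "\<dots> = (\<Sum>i\<in>I. \<Sum>j\<in>I. complex_of_real (c i * c j) * cis (2*pi*real_of_int (y i - y j)*t))"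
    unfolding z_def by (simp add: sum_product cis_cnj mult_ac cis_mult algebra_simps)
  finally have "(cmod z)^2 = Re (\<Sum>i\<in>I. \<Sum>j\<in>I. complex_of_real (c i * c j) * cis (2*pi*real_of_int (y i - y j)*t))"
    by (metis Re_complex_of_real)
  also have "\<dots> = (\<Sum>i\<in>I. \<Sum>j\<in>I. c i * c j * cos (2*pi*real_of_int (y i - y j)*t))"
    by (simp add: Re_sum)
  finally show ?thesis by (simp add: z_def)
qed

lemma parseval:
  fixes c :: "'i \<Rightarrow> real" and y :: "'i \<Rightarrow> int"
  assumes "finite I"
  shows "((\<lambda>t. (cmod (\<Sum>i\<in>I. complex_of_real (c i) * cis (2*pi*t*real_of_int (y i))))^2)
           has_integral (\<Sum>i\<in>I. \<Sum>j\<in>I. if y i = y j then c i * c j else 0)) {0..1}"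
proof -
  have "((\<lambda>t. \<Sum>i\<in>I. \<Sum>j\<in>I. c i * c j * cos (2*pi*real_of_int (y i - y j)*t)) has_integral
        (\<Sum>i\<in>I. \<Sum>j\<in>I. c i * c j * (if y i - y j = 0 then 1 else 0))) {0..1}"
    by (intro has_integral_sum assms has_integral_mult_right cos_integral)
  then show ?thesis
    by (subst trig_poly_norm_sq[OF assms]) (simp add: if_distrib cong: if_cong)
qed

lemma grouped_cauchy_schwarz:
  fixes c :: "'i \<Rightarrow> real" and s :: "int \<Rightarrow> real" and y :: "'i \<Rightarrow> int"
  assumes "finite I" "finite Y" "\<forall>i\<in>I. y i \<in> Y"
  shows "(\<Sum>i\<in>I. c i * s (y i))^2 \<le> (\<Sum>i\<in>I. \<Sum>j\<in>I. if y i = y j then c i * c j else 0) * (\<Sum>n\<in>Y. (s n)^2)"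
proof -
  define b where "b n = (\<Sum>i\<in>I. if y i = n then c i else 0)" for n
  have collapse: "(\<Sum>n\<in>Y. \<Sum>i\<in>I. if y i = n then g i n else 0) = (\<Sum>i\<in>I. g i (y i))"
    for g :: "'i \<Rightarrow> int \<Rightarrow> real"
  proof -
    have "(\<Sum>n\<in>Y. \<Sum>i\<in>I. if y i = n then g i n else 0) = (\<Sum>i\<in>I. \<Sum>n\<in>Y. if y i = n then g i n else 0)"
      by (rule sum.swap)
    also have "\<dots> = (\<Sum>i\<in>I. g i (y i))"
      using assms(2,3) by (intro sum.cong refl) (simp add: if_distrib cong: if_cong)
    finally show ?thesis .
  qed
  have "(\<Sum>n\<in>Y. b n * s n) = (\<Sum>n\<in>Y. \<Sum>i\<in>I. if y i = n then c i * s n else 0)"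
    unfolding b_def sum_distrib_right by (intro sum.cong refl) auto
  also have "\<dots> = (\<Sum>i\<in>I. c i * s (y i))" by (rule collapse)
  finally have grouped: "(\<Sum>i\<in>I. c i * s (y i)) = (\<Sum>n\<in>Y. b n * s n)" ..
  have "(\<Sum>n\<in>Y. (b n)^2) = (\<Sum>n\<in>Y. \<Sum>i\<in>I. if y i = n then c i * b n else 0)"
    unfolding power2_eq_square b_def[of n for n] sum_distrib_right by (intro sum.cong refl) auto
  also have "\<dots> = (\<Sum>i\<in>I. c i * b (y i))" by (rule collapse)
  also have "\<dots> = (\<Sum>i\<in>I. \<Sum>j\<in>I. if y i = y j then c i * c j else 0)"
    unfolding b_def by (intro sum.cong refl) (simp add: sum_distrib_left if_distrib eq_commute cong: if_cong)
  finally show ?thesis using Cauchy_Schwarz_ineq_sum[of b s Y] grouped by simp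
qed

lemma e_cis: "e (complex_of_real r) = cis (2*pi*r)"
  by (simp add: e_def cis_conv_exp mult_ac)

theorem lemma1:
  fixes \<delta> P T :: real and X :: "real set" and I :: "'i set"
    and y :: "'i \<Rightarrow> int" and a :: "'i \<Rightarrow> complex"
    and f fstar :: "real \<Rightarrow> complex"
  assumes "\<delta> > 0" and "P > 0"
    and "delta_spaced \<delta> X" and "X \<subseteq> {-P..P}"
    and "finite I"
    and "T \<ge> 0" and "\<forall>i\<in>I. \<bar>real_of_int (y i)\<bar> \<le> T"
    and "\<And>t. f t = (\<Sum>i\<in>I. a i * e (complex_of_real (t * real_of_int (y i))))"
    and "\<And>t. fstar t = (\<Sum>i\<in>I. complex_of_real (cmod (a i)) * e (complex_of_real (t * real_of_int (y i))))"
  shows "cmod (\<Sum>x\<in>X. f x) \<le>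
    pi * sqrt (real (card X) * T + real (card X) / \<delta>) * sqrt (P + 2)
       * sqrt (integral {0..1} (\<lambda>t. (cmod (fstar t))^2))"
proof -
  have finX: "finite X" and sep: "separated \<delta> X"
    using assms(3) unfolding delta_spaced_def by auto
  define K where "K = \<lfloor>T\<rfloor>"
  define S where "S = exp_sum X"
  define B where "B = (\<Sum>i\<in>I. \<Sum>j\<in>I. if y i = y j then cmod (a i) * cmod (a j) else 0)"
  define Q where "Q = (\<Sum>n\<in>{-K..K}. (cmod (S n))^2)"
  have e_t: "e (complex_of_real (t * real_of_int n)) = cis (2*pi*t*real_of_int n)" for t n
    by (simp only: e_cis) (simp add: mult_ac)
  have "(\<Sum>x\<in>X. f x) = (\<Sum>i\<in>I. a i * S (y i))"
    unfolding assms(8) e_t S_def exp_sum_def sum_distrib_left by (rule sum.swap)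
  then have triangle: "cmod (\<Sum>x\<in>X. f x) \<le> (\<Sum>i\<in>I. cmod (a i) * cmod (S (y i)))"
    using norm_sum[of "\<lambda>i. a i * S (y i)" I] by (simp add: norm_mult)
  have cauchy_schwarz: "(\<Sum>i\<in>I. cmod (a i) * cmod (S (y i)))^2 \<le> B * Q"
  proof (unfold B_def Q_def, intro grouped_cauchy_schwarz ballI)
    fix i assume "i \<in> I"
    then have "real_of_int (y i) \<le> T" "real_of_int (- y i) \<le> T" using assms(7) by auto
    then show "y i \<in> {-K..K}" unfolding K_def le_floor_iff[symmetric] by simp
  qed (use assms(5) in auto)
  have sieve: "Q \<le> pi^2 * ((real (card X) * T + real (card X) / \<delta>) * (P + 2))"
    unfolding Q_def S_def K_def using assms(2)
    by (intro large_sieve[OF finX assms(1) sep assms(4) _ separated_diameter[OF assms(3,4)] assms(6)]) simp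
  have "((\<lambda>t. (cmod (fstar t))^2) has_integral B) {0..1}"
    unfolding assms(9) e_t B_def by (rule parseval[OF assms(5)])
  then have parseval_B: "integral {0..1} (\<lambda>t. (cmod (fstar t))^2) = B" and B0: "B \<ge> 0"
    by (auto simp: integral_unique intro: has_integral_nonneg)
  have "(\<Sum>i\<in>I. cmod (a i) * cmod (S (y i)))^2 \<le> pi^2 * ((real (card X) * T + real (card X) / \<delta>) * ((P + 2) * B))"
    using cauchy_schwarz mult_left_mono[OF sieve B0] by (simp add: mult_ac)
  then have "(\<Sum>i\<in>I. cmod (a i) * cmod (S (y i))) \<le> sqrt (pi^2 * ((real (card X) * T + real (card X) / \<delta>) * ((P + 2) * B)))"
    by (rule real_le_rsqrt)
  with triangle parseval_B show ?thesis by (simp add: real_sqrt_mult mult_ac)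
qed

end
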